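(* Let $\mathcal F$ be a saturated fusion system over a finite $p$-group $S$, let $H\le S$ be fully $\mathcal F$-normalized and $\mathcal F$-centric, $N_{\mathcal F}=N_{\mathcal F}(H)$, and let $K\in\mathcal F^c$. For every $(A,\overline\varphi)\in[N_{\mathcal F}\times K]$ we have $A=N^{N_{\mathcal F}}_{\overline\varphi}\cap H$.
   Context: Fusion system $\mathcal F$ over $S$: objects the subgroups of $S$, morphisms injective homomorphisms containing conjugations $c_s:x\mapsto sxs^{-1}$ ($s\in S$), each morphism's isomorphism onto its image and its inverse in $\mathcal F$; saturated. $\operatorname{Aut}_T(P)=\{c_x|_P:x\in N_T(P)\}$. Fully $\mathcal F$-normalized: $|N_S(P')|\le|N_S(P)|$ for all $P'$ $\mathcal F$-isomorphic to $P$ (likewise for other fusion systems). $\mathcal F$-centric: $C_S(P')\le P'$ for all such $P'$; $\mathcal F^c$ the set of these. $N_{\mathcal F}(H)$: fusion system over $N_S:=N_S(H)$ whose morphisms $A\to B$ are the $\varphi\in\operatorname{Hom}_{\mathcal F}(A,B)$ extending to a morphism $AH\to BH$ in $\mathcal F$. Orbit category: $\operatorname{Hom}_{\mathcal O(\mathcal F)}(P,Q)=\operatorname{Aut}_Q(Q)\backslash\operatorname{Hom}_{\mathcal F}(P,Q)$, $\overline\varphi$ the class of $\varphi$. $[H\times_{\mathcal F}K]$: among pairs $(A,\overline\varphi)$, $A\in\mathcal F^c$, $A\le H$, $\overline\varphi\in\operatorname{Hom}_{\mathcal O(\mathcal F)}(A,K)$, put $(A,\overline\varphi)\precsim(B,\overline\psi)$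 iff some $h\in H$ has $h^{-1}Ah\le B$ and $\overline\varphi\,\overline{c_h}=\overline\psi\,\overline\iota$; $[H\times_{\mathcal F}K]$ has one representative of each mutual-$\precsim$ class of maximal pairs. For $A,K\in\mathcal F^c$ with $A\le N_S$ and $\varphi\in\operatorname{Hom}_{\mathcal F}(A,K)$: ${}^{N_{\mathcal F}}_{\varphi}N=\{x\in N_K(\varphi(A)):\varphi^{-1}c_x\varphi\in\operatorname{Aut}_{N_{\mathcal F}}(A)\}$; $\varphi$ is an $N_{\mathcal F}$-top if $A$ is fully $N_{\mathcal F}$-normalized and, with $N^{N_{\mathcal F}}_\varphi=\{x\in N_{N_S}(A):c_x\in\varphi^{-1}\operatorname{Aut}_{{}^{N_{\mathcal F}}_{\varphi}N}(\varphi(A))\varphi\}$, $\operatorname{Aut}_{{}^{N_{\mathcal F}}_{\varphi}N}(\varphi(A))=\varphi\operatorname{Aut}_{N^{N_{\mathcal F}}_\varphi}(A)\varphi^{-1}$. This property and $N^{N_{\mathcal F}}_\varphi$ depend only on $\overline\varphi$; write $N^{N_{\mathcal F}}_{\overline\varphi}$. $[N_{\mathcal F}\times K]\subseteq[H\times_{\mathcal F}K]$: one representative of each class of the relation $(A,\overline\varphi)\sim(B,\overline\psi)$ iff $\overline\varphi=\overline\psi\,\overline\theta$ for an isomorphism $\overline\theta:B\to A$ in $\mathcal O(N_{\mathcal F})$, chosen with $A$ fully $N_{\mathcal F}$-normalized and $\overline\varphi$ represented by an $N_{\mathcal F}$-top. *)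

theory Defs
  imports "HOL-Algebra.Algebra"
begin

(* Morphisms of a fusion
   system between subgroups P, Q are represented as functions extensional on P.
   A fusion system is given by F :: 'a set => 'a set => ('a => 'a) set,
   F P Q = Hom_F(P,Q). *)

definition conjm :: "('a,'b) monoid_scheme \<Rightarrow> 'a \<Rightarrow> 'a \<Rightarrow> 'a" where
  "conjm S x = (\<lambda>y. x \<otimes>\<^bsub>S\<^esub> y \<otimes>\<^bsub>S\<^esub> inv\<^bsub>S\<^esub> x)"

definition cmor :: "('a,'b) monoid_scheme \<Rightarrow> 'a \<Rightarrow> 'a set \<Rightarrow> 'a \<Rightarrow> 'a" where
  "cmor S x P = restrict (conjm S x) P"

definition normT :: "('a,'b) monoid_scheme \<Rightarrow> 'a set \<Rightarrow> 'a set \<Rightarrow> 'a set" where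
  "normT S T P = {x \<in> T. conjm S x ` P = P}"

definition centT :: "('a,'b) monoid_scheme \<Rightarrow> 'a set \<Rightarrow> 'a set \<Rightarrow> 'a set" where
  "centT S T P = {x \<in> T. \<forall>y\<in>P. x \<otimes>\<^bsub>S\<^esub> y = y \<otimes>\<^bsub>S\<^esub> x}"

definition AutT :: "('a,'b) monoid_scheme \<Rightarrow> 'a set \<Rightarrow> 'a set \<Rightarrow> ('a \<Rightarrow> 'a) set" where
  "AutT S T P = (\<lambda>x. cmor S x P) ` normT S T P"

definition fusion_system ::
  "('a,'b) monoid_scheme \<Rightarrow> ('a set \<Rightarrow> 'a set \<Rightarrow> ('a \<Rightarrow> 'a) set) \<Rightarrow> bool" where
  "fusion_system S F \<longleftrightarrow>
     (\<forall>P Q \<phi>. \<phi> \<in> F P Q \<longrightarrow> subgroup P S \<and> subgroup Q S \<and> \<phi> \<in> extensional P \<and>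
         \<phi> \<in> hom (S\<lparr>carrier := P\<rparr>) (S\<lparr>carrier := Q\<rparr>) \<and> inj_on \<phi> P) \<and>
     (\<forall>P Q x. subgroup P S \<longrightarrow> subgroup Q S \<longrightarrow> x \<in> carrier S \<longrightarrow>
         conjm S x ` P \<subseteq> Q \<longrightarrow> cmor S x P \<in> F P Q) \<and>
     (\<forall>P Q R \<phi> \<psi>. \<phi> \<in> F P Q \<longrightarrow> \<psi> \<in> F Q R \<longrightarrow> restrict (\<psi> \<circ> \<phi>) P \<in> F P R) \<and>
     (\<forall>P Q \<phi>. \<phi> \<in> F P Q \<longrightarrow>
         \<phi> \<in> F P (\<phi> ` P) \<and> restrict (inv_into P \<phi>) (\<phi> ` P) \<in> F (\<phi> ` P) P)"

definition isoF :: "('a set \<Rightarrow> 'a set \<Rightarrow> ('a \<Rightarrow> 'a) set) \<Rightarrow> 'a set \<Rightarrow> 'a set \<Rightarrow> bool" where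
  "isoF F P Q \<longleftrightarrow> (\<exists>\<phi>\<in>F P Q. \<phi> ` P = Q)"

definition fully_normalized ::
  "('a,'b) monoid_scheme \<Rightarrow> 'a set \<Rightarrow> ('a set \<Rightarrow> 'a set \<Rightarrow> ('a \<Rightarrow> 'a) set) \<Rightarrow> 'a set \<Rightarrow> bool" where
  "fully_normalized S T F P \<longleftrightarrow> subgroup P S \<and> P \<subseteq> T \<and>
     (\<forall>P'. isoF F P P' \<longrightarrow> card (normT S T P') \<le> card (normT S T P))"

definition fully_centralized ::
  "('a,'b) monoid_scheme \<Rightarrow> 'a set \<Rightarrow> ('a set \<Rightarrow> 'a set \<Rightarrow> ('a \<Rightarrow> 'a) set) \<Rightarrow> 'a set \<Rightarrow> bool" where
  "fully_centralized S T F P \<longleftrightarrow> subgroup P S \<and> P \<subseteq> T \<and>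
     (\<forall>P'. isoF F P P' \<longrightarrow> card (centT S T P') \<le> card (centT S T P))"

definition centric ::
  "('a,'b) monoid_scheme \<Rightarrow> ('a set \<Rightarrow> 'a set \<Rightarrow> ('a \<Rightarrow> 'a) set) \<Rightarrow> 'a set \<Rightarrow> bool" where
  "centric S F P \<longleftrightarrow> subgroup P S \<and>
     (\<forall>P'. isoF F P P' \<longrightarrow> centT S (carrier S) P' \<subseteq> P')"

definition sylow_subset :: "nat \<Rightarrow> 'c set \<Rightarrow> 'c set \<Rightarrow> bool" where
  "sylow_subset p U Y \<longleftrightarrow> Y \<subseteq> U \<and> (\<exists>k. card Y = p ^ k) \<and> (card U div card Y) mod p \<noteq> 0"

definition Nphi ::
  "('a,'b) monoid_scheme \<Rightarrow> 'a set \<Rightarrow> ('a \<Rightarrow> 'a) \<Rightarrow> 'a set" where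
  "Nphi S P \<phi> = {g \<in> normT S (carrier S) P.
     restrict (\<phi> \<circ> conjm S g \<circ> inv_into P \<phi>) (\<phi> ` P) \<in> AutT S (carrier S) (\<phi> ` P)}"

(* saturation, Broto-Levi-Oliver definition *)
definition saturated ::
  "('a,'b) monoid_scheme \<Rightarrow> nat \<Rightarrow> ('a set \<Rightarrow> 'a set \<Rightarrow> ('a \<Rightarrow> 'a) set) \<Rightarrow> bool" where
  "saturated S p F \<longleftrightarrow> fusion_system S F \<and>
     (\<forall>P. fully_normalized S (carrier S) F P \<longrightarrow>
          fully_centralized S (carrier S) F P \<and> sylow_subset p (F P P) (AutT S (carrier S) P)) \<and>
     (\<forall>P \<phi>. \<phi> \<in> F P (carrier S) \<longrightarrow> fully_centralized S (carrier S) F (\<phi> ` P) \<longrightarrow>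
          (\<exists>\<psi> \<in> F (Nphi S P \<phi>) (carrier S). restrict \<psi> P = \<phi>))"

definition NF ::
  "('a,'b) monoid_scheme \<Rightarrow> ('a set \<Rightarrow> 'a set \<Rightarrow> ('a \<Rightarrow> 'a) set) \<Rightarrow> 'a set \<Rightarrow>
   'a set \<Rightarrow> 'a set \<Rightarrow> ('a \<Rightarrow> 'a) set" where
  "NF S F H A B = {\<phi> \<in> F A B. A \<subseteq> normT S (carrier S) H \<and> B \<subseteq> normT S (carrier S) H \<and>
     (\<exists>\<psi> \<in> F (A <#>\<^bsub>S\<^esub> H) (B <#>\<^bsub>S\<^esub> H). restrict \<psi> A = \<phi> \<and> \<psi> ` H = H)}"

(* class of phi in Hom_O(F)(P,Q) = Aut_Q(Q)\Hom_F(P,Q) *)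
definition orbcl ::
  "('a,'b) monoid_scheme \<Rightarrow> 'a set \<Rightarrow> 'a set \<Rightarrow> ('a \<Rightarrow> 'a) \<Rightarrow> ('a \<Rightarrow> 'a) set" where
  "orbcl S P Q \<phi> = (\<lambda>q. restrict (conjm S q \<circ> \<phi>) P) ` Q"

(* admissible pairs (A, phi-bar) for [H x_F K] *)
definition pairHK ::
  "('a,'b) monoid_scheme \<Rightarrow> ('a set \<Rightarrow> 'a set \<Rightarrow> ('a \<Rightarrow> 'a) set) \<Rightarrow> 'a set \<Rightarrow> 'a set \<Rightarrow>
   'a set \<Rightarrow> ('a \<Rightarrow> 'a) \<Rightarrow> bool" where
  "pairHK S F H K A \<phi> \<longleftrightarrow> centric S F A \<and> A \<subseteq> H \<and> \<phi> \<in> F A K"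

definition precHK ::
  "('a,'b) monoid_scheme \<Rightarrow> 'a set \<Rightarrow> 'a set \<Rightarrow>
   'a set \<Rightarrow> ('a \<Rightarrow> 'a) \<Rightarrow> 'a set \<Rightarrow> ('a \<Rightarrow> 'a) \<Rightarrow> bool" where
  "precHK S H K A \<phi> B \<psi> \<longleftrightarrow> (\<exists>h\<in>H. conjm S (inv\<^bsub>S\<^esub> h) ` A \<subseteq> B \<and>
     orbcl S (conjm S (inv\<^bsub>S\<^esub> h) ` A) K
        (restrict (\<phi> \<circ> conjm S h) (conjm S (inv\<^bsub>S\<^esub> h) ` A))
   = orbcl S (conjm S (inv\<^bsub>S\<^esub> h) ` A) K (restrict \<psi> (conjm S (inv\<^bsub>S\<^esub> h) ` A)))"

definition maximal_pair ::
  "('a,'b) monoid_scheme \<Rightarrow> ('a set \<Rightarrow> 'a set \<Rightarrow> ('a \<Rightarrow> 'a) set) \<Rightarrow> 'a set \<Rightarrow> 'a set \<Rightarrow>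
   'a set \<Rightarrow> ('a \<Rightarrow> 'a) \<Rightarrow> bool" where
  "maximal_pair S F H K A \<phi> \<longleftrightarrow> pairHK S F H K A \<phi> \<and>
     (\<forall>B \<psi>. pairHK S F H K B \<psi> \<longrightarrow> precHK S H K A \<phi> B \<psi> \<longrightarrow> precHK S H K B \<psi> A \<phi>)"

definition NNup ::
  "('a,'b) monoid_scheme \<Rightarrow> ('a set \<Rightarrow> 'a set \<Rightarrow> ('a \<Rightarrow> 'a) set) \<Rightarrow> 'a set \<Rightarrow> 'a set \<Rightarrow>
   'a set \<Rightarrow> ('a \<Rightarrow> 'a) \<Rightarrow> 'a set" where
  "NNup S F H K A \<phi> = {x \<in> normT S K (\<phi> ` A).
     restrict (inv_into A \<phi> \<circ> conjm S x \<circ> \<phi>) A \<in> NF S F H A A}"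

definition NNlow ::
  "('a,'b) monoid_scheme \<Rightarrow> ('a set \<Rightarrow> 'a set \<Rightarrow> ('a \<Rightarrow> 'a) set) \<Rightarrow> 'a set \<Rightarrow> 'a set \<Rightarrow>
   'a set \<Rightarrow> ('a \<Rightarrow> 'a) \<Rightarrow> 'a set" where
  "NNlow S F H K A \<phi> = {x \<in> normT S (normT S (carrier S) H) A.
     cmor S x A \<in> (\<lambda>\<alpha>. restrict (inv_into A \<phi> \<circ> \<alpha> \<circ> \<phi>) A) ` AutT S (NNup S F H K A \<phi>) (\<phi> ` A)}"

definition is_top ::
  "('a,'b) monoid_scheme \<Rightarrow> ('a set \<Rightarrow> 'a set \<Rightarrow> ('a \<Rightarrow> 'a) set) \<Rightarrow> 'a set \<Rightarrow> 'a set \<Rightarrow>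
   'a set \<Rightarrow> ('a \<Rightarrow> 'a) \<Rightarrow> bool" where
  "is_top S F H K A \<phi> \<longleftrightarrow>
     fully_normalized S (normT S (carrier S) H) (NF S F H) A \<and>
     AutT S (NNup S F H K A \<phi>) (\<phi> ` A) =
       (\<lambda>\<beta>. restrict (\<phi> \<circ> \<beta> \<circ> inv_into A \<phi>) (\<phi> ` A)) ` AutT S (NNlow S F H K A \<phi>) A"

end

theory Submission
  imports Defs
begin

text \<open>For \<open>a \<in> A\<close>, \<open>\<phi>\<close> transports \<open>c\<^sub>a\<close> on \<open>A\<close> to \<open>c\<^bsub>\<phi>(a)\<^esub>\<close> on \<open>\<phi>(A)\<close>, and \<open>c\<^sub>a\<close> extends to an
  automorphism of \<open>AH = H\<close>; hence \<open>A \<le> N\<^sup>N\<^sup>F\<^sub>\<phi> \<inter> H\<close>. Conversely, let \<open>x \<in> N\<^sup>N\<^sup>F\<^sub>\<phi> \<inter> H\<close> act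
  on \<open>A\<close> as \<open>\<phi>\<^sup>-\<^sup>1 c\<^sub>y \<phi>\<close> with \<open>y \<in> K\<close>. Then \<open>x \<in> N\<^sub>\<phi>\<close>; since \<open>A\<close> is centric, \<open>\<phi>(A)\<close> is fully
  centralized and saturation extends \<open>\<phi>\<close> to \<open>\<psi>\<close> on \<open>N\<^sub>\<phi>\<close>. The subgroup
  \<open>B = {g \<in> N\<^sub>\<phi> \<inter> H. \<psi>(g) \<in> K}\<close> contains \<open>A\<close>, and maximality of \<open>(A, \<phi>)\<close> forces \<open>B = A\<close>.
  Finally \<open>\<psi>(x)\<close> and \<open>y\<close> induce the same conjugation on \<open>\<phi>(A)\<close>, so
  \<open>\<psi>(x) \<in> y C\<^sub>S(\<phi>(A)) \<subseteq> y \<phi>(A) \<subseteq> K\<close> and \<open>x \<in> B = A\<close>.\<close>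

section \<open>Conjugation\<close>

lemma (in group) conjm_one: "y \<in> carrier G \<Longrightarrow> conjm G \<one> y = y"
  by (simp add: conjm_def)

lemma (in group) conjm_image_subgroup_self:
  assumes "subgroup P G" "g \<in> P"
  shows "conjm G g ` P = P"
proof -
  have g: "g \<in> carrier G" using subgroup.mem_carrier[OF assms] .
  have into: "conjm G h ` P \<subseteq> P" if "h \<in> P" for h
    using that assms(1) by (auto simp: conjm_def subgroup.m_closed subgroup.m_inv_closed)
  have "P \<subseteq> conjm G g ` P"
  proof
    fix y assume y: "y \<in> P"
    then have "inv g \<otimes> y \<otimes> g \<in> P"
      using assms by (simp add: subgroup.m_closed subgroup.m_inv_closed)
    moreover have "y = conjm G g (inv g \<otimes> y \<otimes> g)"
      using g subgroup.mem_carrier[OF assms(1) y] by (simp add: conjm_def conjugation_is_surj)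
    ultimately show "y \<in> conjm G g ` P" by blast
  qed
  with into[OF assms(2)] show ?thesis by blast
qed

lemma (in group) inj_on_conjm: "g \<in> carrier G \<Longrightarrow> inj_on (conjm G g) (carrier G)"
  by (auto simp: inj_on_def conjm_def)

lemma (in group) conjm_eq_imp_commute:
  assumes "u \<in> carrier G" "v \<in> carrier G" "b \<in> carrier G" "conjm G u b = conjm G v b"
  shows "(inv v \<otimes> u) \<otimes> b = b \<otimes> (inv v \<otimes> u)"
proof -
  have eq: "u \<otimes> b = v \<otimes> b \<otimes> inv v \<otimes> u"
    using assms by (metis conjm_def inv_closed inv_solve_right m_closed)
  have "(inv v \<otimes> u) \<otimes> b = inv v \<otimes> (u \<otimes> b)"
    using assms by (simp add: m_assoc)
  also have "\<dots> = b \<otimes> (inv v \<otimes> u)"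
    using assms by (simp add: eq m_assoc[symmetric])
  finally show ?thesis .
qed

lemma (in group) subgroup_set_mult_absorb:
  assumes "subgroup A G" "subgroup H G" "A \<subseteq> H"
  shows "A <#> H = H"
proof
  show "A <#> H \<subseteq> H"
    using assms by (auto simp: set_mult_def intro: subgroup.m_closed)
  show "H \<subseteq> A <#> H"
  proof
    fix h assume "h \<in> H"
    moreover have "h = \<one> \<otimes> h" using \<open>h \<in> H\<close> assms(2) by (simp add: subgroup.mem_carrier)
    ultimately show "h \<in> A <#> H"
      using subgroup.one_closed[OF assms(1)] unfolding set_mult_def by blast
  qed
qed

lemma (in group) subset_normT_subgroup:
  assumes "subgroup H G" "B \<subseteq> H"
  shows "B \<subseteq> normT G (carrier G) H"
  using assms conjm_image_subgroup_self subgroup.mem_carrier unfolding normT_def by fastforce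

lemma conjm_transport_image:
  assumes "inj_on \<phi> A" "\<forall>a\<in>A. \<phi> (conjm S x a) = conjm S y (\<phi> a)"
  shows "restrict (\<phi> \<circ> conjm S x \<circ> inv_into A \<phi>) (\<phi> ` A) = cmor S y (\<phi> ` A)"
  using assms by (auto simp: cmor_def fun_eq_iff)

lemma restrict_cmor_image:
  "restrict (f \<circ> cmor S y (\<phi> ` A) \<circ> \<phi>) A = restrict (f \<circ> conjm S y \<circ> \<phi>) A"
  by (auto simp: cmor_def fun_eq_iff)

lemma cmor_eq_transport_iff:
  assumes "inj_on \<phi> A" "conjm S x ` A = A" "conjm S y ` \<phi> ` A = \<phi> ` A"
  shows "cmor S x A = restrict (inv_into A \<phi> \<circ> conjm S y \<circ> \<phi>) A \<longleftrightarrow>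
    (\<forall>a\<in>A. \<phi> (conjm S x a) = conjm S y (\<phi> a))"
proof
  assume eq: "cmor S x A = restrict (inv_into A \<phi> \<circ> conjm S y \<circ> \<phi>) A"
  show "\<forall>a\<in>A. \<phi> (conjm S x a) = conjm S y (\<phi> a)"
  proof
    fix a assume a: "a \<in> A"
    have "conjm S x a = inv_into A \<phi> (conjm S y (\<phi> a))"
      using fun_cong[OF eq, of a] a by (simp add: cmor_def)
    moreover have "conjm S y (\<phi> a) \<in> \<phi> ` A" using assms(3) a by blast
    ultimately show "\<phi> (conjm S x a) = conjm S y (\<phi> a)" by (simp add: f_inv_into_f)
  qed
next
  assume pointwise: "\<forall>a\<in>A. \<phi> (conjm S x a) = conjm S y (\<phi> a)"
  show "cmor S x A = restrict (inv_into A \<phi> \<circ> conjm S y \<circ> \<phi>) A"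
  proof (rule ext)
    fix a
    show "cmor S x A a = restrict (inv_into A \<phi> \<circ> conjm S y \<circ> \<phi>) A a"
    proof (cases "a \<in> A")
      case True
      then have "inv_into A \<phi> (\<phi> (conjm S x a)) = conjm S x a"
        using assms(2) by (blast intro: inv_into_f_f[OF assms(1)])
      with True pointwise show ?thesis by (simp add: cmor_def)
    qed (simp add: cmor_def)
  qed
qed

lemma conjm_transport_mem_Nphi:
  assumes "inj_on \<phi> A" "x \<in> carrier S" "conjm S x ` A = A"
    and "y \<in> carrier S" "conjm S y ` \<phi> ` A = \<phi> ` A"
    and "\<forall>a\<in>A. \<phi> (conjm S x a) = conjm S y (\<phi> a)"
  shows "x \<in> Nphi S A \<phi>"
  using assms conjm_transport_image[OF assms(1,6)]
  unfolding Nphi_def AutT_def normT_def by auto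

section \<open>Morphisms of a fusion system\<close>

locale group_fusion_system = group S for S :: "('a, 'b) monoid_scheme" (structure) +
  fixes F :: "'a set \<Rightarrow> 'a set \<Rightarrow> ('a \<Rightarrow> 'a) set"
  assumes fusion_system: "fusion_system S F"
begin

lemma morD:
  assumes "\<phi> \<in> F P Q"
  shows "subgroup P S" "subgroup Q S" "\<phi> \<in> extensional P"
    "\<phi> \<in> hom (S\<lparr>carrier := P\<rparr>) (S\<lparr>carrier := Q\<rparr>)" "inj_on \<phi> P"
  using fusion_system assms unfolding fusion_system_def by blast+

lemma mor_onto_image: "\<phi> \<in> F P Q \<Longrightarrow> \<phi> \<in> F P (\<phi> ` P)"
  using fusion_system unfolding fusion_system_def by blast

lemma mor_inverse: "\<phi> \<in> F P Q \<Longrightarrow> restrict (inv_into P \<phi>) (\<phi> ` P) \<in> F (\<phi> ` P) P"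
  using fusion_system unfolding fusion_system_def by blast

lemma mor_comp: "\<phi> \<in> F P Q \<Longrightarrow> \<psi> \<in> F Q R \<Longrightarrow> restrict (\<psi> \<circ> \<phi>) P \<in> F P R"
  using fusion_system unfolding fusion_system_def by blast

lemma cmor_mor:
  "subgroup P S \<Longrightarrow> subgroup Q S \<Longrightarrow> x \<in> carrier S \<Longrightarrow> conjm S x ` P \<subseteq> Q \<Longrightarrow> cmor S x P \<in> F P Q"
  using fusion_system unfolding fusion_system_def by blast

lemma mor_group_hom:
  assumes "\<phi> \<in> F P Q"
  shows "group_hom (S\<lparr>carrier := P\<rparr>) (S\<lparr>carrier := Q\<rparr>) \<phi>"
  using morD[OF assms] by (simp add: group_hom_def group_hom_axioms_def subgroup.subgroup_is_group)

lemma mor_closed: "\<phi> \<in> F P Q \<Longrightarrow> a \<in> P \<Longrightarrow> \<phi> a \<in> Q"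
  using hom_in_carrier[OF morD(4)] by fastforce

lemma mor_mult: "\<phi> \<in> F P Q \<Longrightarrow> a \<in> P \<Longrightarrow> b \<in> P \<Longrightarrow> \<phi> (a \<otimes> b) = \<phi> a \<otimes> \<phi> b"
  using hom_mult[OF morD(4)] by fastforce

lemma mor_one: "\<phi> \<in> F P Q \<Longrightarrow> \<phi> \<one> = \<one>"
  using group_hom.hom_one[OF mor_group_hom] by fastforce

lemma mor_inv:
  assumes "\<phi> \<in> F P Q" "a \<in> P"
  shows "\<phi> (inv a) = inv (\<phi> a)"
  using group_hom.hom_inv[OF mor_group_hom[OF assms(1)]] assms morD(1,2)[OF assms(1)]
    mor_closed[OF assms] by simp

lemma mor_conjm:
  assumes "\<phi> \<in> F P Q" "g \<in> P" "a \<in> P"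
  shows "\<phi> (conjm S g a) = conjm S (\<phi> g) (\<phi> a)"
  using assms morD(1)[OF assms(1)]
  by (simp add: conjm_def mor_mult mor_inv subgroup.m_closed subgroup.m_inv_closed)

lemma mor_restrict:
  assumes "\<psi> \<in> F Q R" "subgroup P S" "P \<subseteq> Q"
  shows "restrict \<psi> P \<in> F P R"
proof -
  have "cmor S \<one> P \<in> F P Q"
    using assms morD(1) by (intro cmor_mor) (auto simp: conjm_one subgroup.mem_carrier)
  from mor_comp[OF this assms(1)] show ?thesis
    using assms(2) by (simp add: cmor_def conjm_one subgroup.mem_carrier cong: restrict_cong)
qed

lemma mor_corestrict:
  assumes "\<psi> \<in> F P R" "subgroup Q S" "\<psi> ` P \<subseteq> Q"
  shows "\<psi> \<in> F P Q"
proof -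
  have onto: "\<psi> \<in> F P (\<psi> ` P)" using mor_onto_image[OF assms(1)] .
  have image: "subgroup (\<psi> ` P) S" using morD(2)[OF onto] .
  have "cmor S \<one> (\<psi> ` P) \<in> F (\<psi> ` P) Q"
    using assms image by (intro cmor_mor) (auto simp: conjm_one subgroup.mem_carrier)
  from mor_comp[OF onto this] have "restrict (cmor S \<one> (\<psi> ` P) \<circ> \<psi>) P \<in> F P Q" .
  moreover have "restrict (cmor S \<one> (\<psi> ` P) \<circ> \<psi>) P = \<psi>"
    using morD(3)[OF assms(1)] subgroup.mem_carrier[OF image]
    by (auto simp: cmor_def conjm_one fun_eq_iff extensional_def)
  ultimately show ?thesis by simp
qed

lemma isoF_mor_image: "\<phi> \<in> F P Q \<Longrightarrow> isoF F P (\<phi> ` P)"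
  using mor_onto_image unfolding isoF_def by blast

lemma isoF_trans:
  assumes "isoF F P Q" "isoF F Q R"
  shows "isoF F P R"
proof -
  obtain \<phi> \<psi> where "\<phi> \<in> F P Q" "\<phi> ` P = Q" "\<psi> \<in> F Q R" "\<psi> ` Q = R"
    using assms unfolding isoF_def by blast
  then show ?thesis
    unfolding isoF_def by (intro bexI[OF _ mor_comp]) (auto simp: image_comp)
qed

lemma centric_superset:
  assumes "centric S F A" "subgroup B S" "A \<subseteq> B"
  shows "centric S F B"
  unfolding centric_def
proof (intro conjI allI impI)
  fix P' assume "isoF F B P'"
  then obtain \<theta> where \<theta>: "\<theta> \<in> F B P'" "\<theta> ` B = P'" unfolding isoF_def by blast
  have "subgroup A S" using assms(1) unfolding centric_def by blast
  then have "isoF F A (\<theta> ` A)"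
    using isoF_mor_image[OF mor_restrict[OF \<theta>(1) _ assms(3)]] assms(3) by simp
  then have "centT S (carrier S) (\<theta> ` A) \<subseteq> \<theta> ` A"
    using assms(1) unfolding centric_def by blast
  moreover have "\<theta> ` A \<subseteq> P'" using \<theta>(2) assms(3) by blast
  ultimately show "centT S (carrier S) P' \<subseteq> P'" unfolding centT_def by blast
qed (fact assms)

lemma mor_image_center:
  assumes "\<theta> \<in> F P Q"
  shows "\<theta> ` centT S P P \<subseteq> centT S (\<theta> ` P) (\<theta> ` P)"
  using assms by (auto simp: centT_def intro!: imageI) (metis mor_mult)

text \<open>Every \<open>F\<close>-conjugate \<open>P'\<close> of \<open>\<phi>(A)\<close> is centric, so \<open>C\<^sub>S(P') = Z(P')\<close>, and the inverse
  isomorphism \<open>P' \<rightarrow> \<phi>(A)\<close> embeds \<open>Z(P')\<close> into \<open>Z(\<phi>(A)) \<le> C\<^sub>S(\<phi>(A))\<close>.\<close>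
lemma fully_centralized_image_of_centric:
  assumes "finite (carrier S)" "centric S F A" "\<phi> \<in> F A Q"
  shows "fully_centralized S (carrier S) F (\<phi> ` A)"
  unfolding fully_centralized_def
proof (intro conjI allI impI)
  show image: "subgroup (\<phi> ` A) S" using morD(2)[OF mor_onto_image[OF assms(3)]] .
  then show "\<phi> ` A \<subseteq> carrier S" by (rule subgroup.subset)
  fix P' assume iso: "isoF F (\<phi> ` A) P'"
  then obtain \<theta> where \<theta>: "\<theta> \<in> F (\<phi> ` A) P'" "\<theta> ` \<phi> ` A = P'" unfolding isoF_def by blast
  have "isoF F A P'" using isoF_trans[OF isoF_mor_image[OF assms(3)] iso] .
  then have "centT S (carrier S) P' \<subseteq> P'" using assms(2) unfolding centric_def by blast
  then have center: "centT S (carrier S) P' = centT S P' P'"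
    using subgroup.subset[OF morD(2)[OF \<theta>(1)]] by (auto simp: centT_def)
  define \<theta>' where "\<theta>' = restrict (inv_into (\<phi> ` A) \<theta>) P'"
  have \<theta>': "\<theta>' \<in> F P' (\<phi> ` A)" using mor_inverse[OF \<theta>(1)] unfolding \<theta>'_def \<theta>(2) .
  have "\<theta>' ` P' = \<phi> ` A"
    using inv_into_image_cancel[OF morD(5)[OF \<theta>(1)], of "\<phi> ` A"] \<theta>(2) by (simp add: \<theta>'_def)
  then have "\<theta>' ` centT S (carrier S) P' \<subseteq> centT S (\<phi> ` A) (\<phi> ` A)"
    using mor_image_center[OF \<theta>'] center by simp
  also have "\<dots> \<subseteq> centT S (carrier S) (\<phi> ` A)"
    using subgroup.subset[OF image] by (auto simp: centT_def)
  finally have "\<theta>' ` centT S (carrier S) P' \<subseteq> centT S (carrier S) (\<phi> ` A)" .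
  moreover have "inj_on \<theta>' (centT S (carrier S) P')"
    using morD(5)[OF \<theta>'] center by (auto simp: centT_def intro: inj_on_subset)
  moreover have "finite (centT S (carrier S) (\<phi> ` A))"
    using assms(1) by (auto simp: centT_def)
  ultimately show "card (centT S (carrier S) P') \<le> card (centT S (carrier S) (\<phi> ` A))"
    by (intro card_inj_on_le)
qed

section \<open>Normalizer subgroups and maximal pairs\<close>

lemma subgroup_mor_preimage:
  assumes "\<psi> \<in> F N Q" "subgroup K S"
  shows "subgroup {g \<in> N. \<psi> g \<in> K} S"
proof -
  have N: "subgroup N S" using morD(1)[OF assms(1)] .
  show ?thesis
  proof (rule subgroupI)
    show "{g \<in> N. \<psi> g \<in> K} \<subseteq> carrier S" using subgroup.subset[OF N] by blast
    show "{g \<in> N. \<psi> g \<in> K} \<noteq> {}"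
      using mor_one[OF assms(1)] subgroup.one_closed[OF N] subgroup.one_closed[OF assms(2)] by auto
  next
    fix a assume "a \<in> {g \<in> N. \<psi> g \<in> K}"
    then show "inv a \<in> {g \<in> N. \<psi> g \<in> K}"
      using assms N by (simp add: mor_inv subgroup.m_inv_closed)
  next
    fix a b assume "a \<in> {g \<in> N. \<psi> g \<in> K}" "b \<in> {g \<in> N. \<psi> g \<in> K}"
    then show "a \<otimes> b \<in> {g \<in> N. \<psi> g \<in> K}"
      using assms N by (simp add: mor_mult subgroup.m_closed)
  qed
qed

lemma cmor_mem_NF:
  assumes "subgroup A S" "subgroup H S" "A \<subseteq> H" "a \<in> A"
  shows "cmor S a A \<in> NF S F H A A"
proof -
  have aH: "a \<in> H" using assms(3,4) ..
  have a: "a \<in> carrier S" using subgroup.mem_carrier[OF assms(2) aH] .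
  have "cmor S a A \<in> F A A"
    using cmor_mor[OF assms(1,1) a] conjm_image_subgroup_self[OF assms(1,4)] by simp
  moreover have "cmor S a H \<in> F H H" "cmor S a H ` H = H"
    using cmor_mor[OF assms(2,2) a] conjm_image_subgroup_self[OF assms(2) aH]
    by (simp_all add: cmor_def)
  moreover have "restrict (cmor S a H) A = cmor S a A"
    using assms(3) by (auto simp: cmor_def fun_eq_iff)
  moreover have "A \<subseteq> normT S (carrier S) H" using subset_normT_subgroup[OF assms(2,3)] .
  ultimately show ?thesis
    unfolding NF_def subgroup_set_mult_absorb[OF assms(1-3)] by (intro CollectI conjI bexI)
qed

lemma subset_Nphi:
  assumes "\<phi> \<in> F A Q"
  shows "A \<subseteq> Nphi S A \<phi>"
proof
  fix a assume a: "a \<in> A"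
  have A: "subgroup A S" and image: "subgroup (\<phi> ` A) S"
    using morD(1)[OF assms] morD(2)[OF mor_onto_image[OF assms]] .
  show "a \<in> Nphi S A \<phi>"
    using a conjm_image_subgroup_self[OF A a] conjm_image_subgroup_self[OF image]
      subgroup.mem_carrier[OF A a] subgroup.mem_carrier[OF image] mor_conjm[OF assms a]
    by (intro conjm_transport_mem_Nphi[OF morD(5)[OF assms], where y = "\<phi> a"]) auto
qed

lemma subset_NNlow:
  assumes "subgroup H S" "A \<subseteq> H" "\<phi> \<in> F A K"
  shows "A \<subseteq> NNlow S F H K A \<phi>"
proof
  fix a assume a: "a \<in> A"
  have A: "subgroup A S" and image: "subgroup (\<phi> ` A) S"
    using morD(1)[OF assms(3)] morD(2)[OF mor_onto_image[OF assms(3)]] .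
  have normA: "conjm S a ` A = A" using conjm_image_subgroup_self[OF A a] .
  have normImage: "conjm S (\<phi> a) ` \<phi> ` A = \<phi> ` A"
    using conjm_image_subgroup_self[OF image] a by blast
  have transport: "cmor S a A = restrict (inv_into A \<phi> \<circ> conjm S (\<phi> a) \<circ> \<phi>) A"
    using cmor_eq_transport_iff[OF morD(5)[OF assms(3)] normA normImage]
      mor_conjm[OF assms(3) a] by blast
  have "\<phi> a \<in> normT S (NNup S F H K A \<phi>) (\<phi> ` A)"
    using normImage mor_closed[OF assms(3) a] cmor_mem_NF[OF A assms(1,2) a] transport
    unfolding NNup_def normT_def by simp
  then have "cmor S (\<phi> a) (\<phi> ` A) \<in> AutT S (NNup S F H K A \<phi>) (\<phi> ` A)"
    unfolding AutT_def by blast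
  then have "cmor S a A \<in>
      (\<lambda>\<alpha>. restrict (inv_into A \<phi> \<circ> \<alpha> \<circ> \<phi>) A) ` AutT S (NNup S F H K A \<phi>) (\<phi> ` A)"
    by (rule image_eqI[rotated]) (simp only: restrict_cmor_image transport)
  moreover have "a \<in> normT S (normT S (carrier S) H) A"
    using subset_normT_subgroup[OF assms(1,2)] a normA unfolding normT_def by blast
  ultimately show "a \<in> NNlow S F H K A \<phi>" unfolding NNlow_def by blast
qed

lemma mor_value_mem_of_conjm_transport:
  assumes "\<psi> \<in> F N Q" "x \<in> N" "A \<subseteq> N" "subgroup K S" "y \<in> K"
    and "centT S (carrier S) (\<psi> ` A) \<subseteq> K"
    and "\<forall>a\<in>A. \<psi> (conjm S x a) = conjm S y (\<psi> a)"
  shows "\<psi> x \<in> K"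
proof -
  have Q: "subgroup Q S" using morD(2)[OF assms(1)] .
  have \<psi>x: "\<psi> x \<in> carrier S" using subgroup.mem_carrier[OF Q mor_closed[OF assms(1,2)]] .
  have y: "y \<in> carrier S" using subgroup.mem_carrier[OF assms(4,5)] .
  have "inv y \<otimes> \<psi> x \<in> centT S (carrier S) (\<psi> ` A)"
    unfolding centT_def
  proof (intro CollectI conjI ballI)
    show "inv y \<otimes> \<psi> x \<in> carrier S" using y \<psi>x by simp
    fix b assume "b \<in> \<psi> ` A"
    then obtain a where a: "a \<in> A" "b = \<psi> a" by blast
    then have aN: "a \<in> N" using assms(3) by blast
    have b: "b \<in> carrier S" using subgroup.mem_carrier[OF Q mor_closed[OF assms(1) aN]] a(2) by simp
    have "conjm S (\<psi> x) b = \<psi> (conjm S x a)" using mor_conjm[OF assms(1,2) aN] a(2) by simp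
    also have "\<dots> = conjm S y b" using assms(7) a by simp
    finally show "(inv y \<otimes> \<psi> x) \<otimes> b = b \<otimes> (inv y \<otimes> \<psi> x)"
      by (rule conjm_eq_imp_commute[OF \<psi>x y b])
  qed
  then have "y \<otimes> (inv y \<otimes> \<psi> x) \<in> K"
    using assms(6) subgroup.m_closed[OF assms(4,5)] by blast
  then show ?thesis using y \<psi>x by (simp add: m_assoc[symmetric])
qed

lemma precHK_one:
  assumes "\<one> \<in> H" "A \<subseteq> carrier S" "A \<subseteq> B" "\<phi> \<in> extensional A" "restrict \<psi> A = \<phi>"
  shows "precHK S H K A \<phi> B \<psi>"
proof -
  have "conjm S (inv \<one>) ` A = A" using assms(2) by (force simp: conjm_one)
  moreover have "restrict (\<phi> \<circ> conjm S \<one>) A = restrict \<psi> A"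
    using assms(2,4,5) by (auto simp: conjm_one fun_eq_iff extensional_def)
  ultimately show ?thesis unfolding precHK_def using assms(1,3) by (intro bexI[of _ \<one>]) auto
qed

lemma precHK_card_le:
  assumes "precHK S H K B \<psi> A \<phi>" "finite A" "H \<subseteq> carrier S" "B \<subseteq> carrier S"
  shows "card B \<le> card A"
proof -
  obtain h where "h \<in> H" "conjm S (inv h) ` B \<subseteq> A" using assms(1) unfolding precHK_def by blast
  moreover have "inj_on (conjm S (inv h)) B"
    using inj_on_conjm \<open>h \<in> H\<close> assms(3,4) by (blast intro: inj_on_subset)
  ultimately show ?thesis using assms(2) by (intro card_inj_on_le)
qed

text \<open>By maximality of \<open>(A, \<phi>)\<close>, the pair \<open>(B, \<psi>|\<^sub>B)\<close>, which dominates it via \<open>h = 1\<close>, is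
  dominated back, so \<open>B\<close> has an \<open>H\<close>-conjugate inside \<open>A\<close>.\<close>
lemma maximal_pair_extension_domain:
  assumes "finite (carrier S)" "subgroup H S" "subgroup K S" "maximal_pair S F H K A \<phi>"
    and "\<psi> \<in> F N (carrier S)" "A \<subseteq> N" "restrict \<psi> A = \<phi>"
  shows "H \<inter> {g \<in> N. \<psi> g \<in> K} = A"
proof -
  define B where "B = H \<inter> {g \<in> N. \<psi> g \<in> K}"
  have pair: "centric S F A" "A \<subseteq> H" "\<phi> \<in> F A K"
    using assms(4) unfolding maximal_pair_def pairHK_def by blast+
  have A: "subgroup A S" using pair(1) unfolding centric_def by blast
  have B: "subgroup B S"
    unfolding B_def using subgroups_Inter_pair assms(2) subgroup_mor_preimage[OF assms(5,3)] by blast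
  have AB: "A \<subseteq> B"
    unfolding B_def using pair(2,3) assms(6,7) mor_closed by fastforce
  have "restrict \<psi> B \<in> F B K"
    using mor_restrict[OF assms(5) B] by (intro mor_corestrict[OF _ assms(3)]) (auto simp: B_def)
  then have "pairHK S F H K B (restrict \<psi> B)"
    unfolding pairHK_def using centric_superset[OF pair(1) B AB] B_def by blast
  moreover have "precHK S H K A \<phi> B (restrict \<psi> B)"
    using subgroup.one_closed[OF assms(2)] subgroup.subset[OF A] AB morD(3)[OF pair(3)] assms(7)
    by (intro precHK_one) (auto simp: Int_absorb1)
  ultimately have "precHK S H K B (restrict \<psi> B) A \<phi>"
    using assms(4) unfolding maximal_pair_def by blast
  then have "card B \<le> card A"
    using finite_subset[OF subgroup.subset[OF A] assms(1)] subgroup.subset[OF assms(2)]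
      subgroup.subset[OF B] by (rule precHK_card_le)
  then have "A = B" by (rule card_seteq[OF finite_subset[OF subgroup.subset[OF B] assms(1)] AB])
  then show ?thesis unfolding B_def by simp
qed

lemma NNlow_conjm_transport:
  assumes "x \<in> NNlow S F H K A \<phi>" "\<phi> \<in> F A K"
  obtains y where "y \<in> K" "conjm S y ` \<phi> ` A = \<phi> ` A"
    "\<forall>a\<in>A. \<phi> (conjm S x a) = conjm S y (\<phi> a)"
proof -
  have x: "conjm S x ` A = A" using assms(1) unfolding NNlow_def normT_def by blast
  have "cmor S x A \<in>
      (\<lambda>\<alpha>. restrict (inv_into A \<phi> \<circ> \<alpha> \<circ> \<phi>) A) ` AutT S (NNup S F H K A \<phi>) (\<phi> ` A)"
    using assms(1) unfolding NNlow_def by blast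
  then obtain y where yN: "y \<in> normT S (NNup S F H K A \<phi>) (\<phi> ` A)"
    and transport: "cmor S x A = restrict (inv_into A \<phi> \<circ> cmor S y (\<phi> ` A) \<circ> \<phi>) A"
    unfolding AutT_def image_image by blast
  have y: "y \<in> K" "conjm S y ` \<phi> ` A = \<phi> ` A"
    using yN unfolding normT_def NNup_def by blast+
  show ?thesis
    using that[OF y] transport cmor_eq_transport_iff[OF morD(5)[OF assms(2)] x y(2)]
    by (simp add: restrict_cmor_image)
qed

lemma saturated_extension:
  assumes "saturated S p F" "\<phi> \<in> F P (carrier S)" "fully_centralized S (carrier S) F (\<phi> ` P)"
  shows "\<exists>\<psi> \<in> F (Nphi S P \<phi>) (carrier S). restrict \<psi> P = \<phi>"
  using assms unfolding saturated_def by blast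

lemma NNlow_Int_subset:
  assumes "finite (carrier S)" "saturated S p F" "subgroup H S" "subgroup K S"
    and "maximal_pair S F H K A \<phi>"
  shows "NNlow S F H K A \<phi> \<inter> H \<subseteq> A"
proof
  fix x assume "x \<in> NNlow S F H K A \<phi> \<inter> H"
  then have x: "x \<in> NNlow S F H K A \<phi>" "x \<in> H" by blast+
  then have xS: "x \<in> carrier S" and xA: "conjm S x ` A = A"
    unfolding NNlow_def normT_def by blast+
  have pair: "centric S F A" "A \<subseteq> H" "\<phi> \<in> F A K"
    using assms(5) unfolding maximal_pair_def pairHK_def by blast+
  have "\<phi> ` A \<subseteq> carrier S" using mor_closed[OF pair(3)] subgroup.subset[OF assms(4)] by blast
  then have \<phi>: "\<phi> \<in> F A (carrier S)" using mor_corestrict[OF pair(3) subgroup_self] by blast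
  obtain y where y: "y \<in> K" "conjm S y ` \<phi> ` A = \<phi> ` A"
    and transport: "\<forall>a\<in>A. \<phi> (conjm S x a) = conjm S y (\<phi> a)"
    using NNlow_conjm_transport[OF x(1) pair(3)] .
  obtain \<psi> where \<psi>: "\<psi> \<in> F (Nphi S A \<phi>) (carrier S)" "restrict \<psi> A = \<phi>"
    using saturated_extension[OF assms(2) \<phi> fully_centralized_image_of_centric[OF assms(1) pair(1,3)]] ..
  have \<psi>a: "\<psi> a = \<phi> a" if "a \<in> A" for a using fun_cong[OF \<psi>(2), of a] that by simp
  have xN: "x \<in> Nphi S A \<phi>"
    using conjm_transport_mem_Nphi[OF morD(5)[OF pair(3)] xS xA _ y(2) transport]
      subgroup.mem_carrier[OF assms(4) y(1)] .
  have "centT S (carrier S) (\<phi> ` A) \<subseteq> \<phi> ` A"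
    using pair(1) isoF_mor_image[OF pair(3)] unfolding centric_def by blast
  moreover have "\<psi> ` A = \<phi> ` A" by (rule image_cong[OF refl \<psi>a])
  ultimately have "centT S (carrier S) (\<psi> ` A) \<subseteq> K"
    using mor_closed[OF pair(3)] by auto
  moreover have "\<forall>a\<in>A. \<psi> (conjm S x a) = conjm S y (\<psi> a)"
  proof
    fix a assume "a \<in> A"
    moreover have "conjm S x a \<in> A" using xA \<open>a \<in> A\<close> by blast
    ultimately show "\<psi> (conjm S x a) = conjm S y (\<psi> a)" using transport \<psi>a by simp
  qed
  ultimately have "\<psi> x \<in> K"
    using mor_value_mem_of_conjm_transport[OF \<psi>(1) xN subset_Nphi[OF pair(3)] assms(4) y(1)]
    by blast
  then have "x \<in> H \<inter> {g \<in> Nphi S A \<phi>. \<psi> g \<in> K}" using x(2) xN by blast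
  then show "x \<in> A"
    using maximal_pair_extension_domain[OF assms(1,3,4,5) \<psi>(1) subset_Nphi[OF pair(3)] \<psi>(2)]
    by blast
qed

end

theorem corollary4p25:
  fixes S :: "('a,'b) monoid_scheme" and p n :: nat
    and F :: "'a set \<Rightarrow> 'a set \<Rightarrow> ('a \<Rightarrow> 'a) set"
    and H K A :: "'a set" and \<phi> :: "'a \<Rightarrow> 'a"
  assumes "group S" and "finite (carrier S)" and "Factorial_Ring.prime p" and "card (carrier S) = p ^ n"
    and "saturated S p F"
    and "subgroup H S" and "fully_normalized S (carrier S) F H" and "centric S F H"
    and "centric S F K"
    and "maximal_pair S F H K A \<phi>"
    and "fully_normalized S (normT S (carrier S) H) (NF S F H) A"
    and "is_top S F H K A \<phi>"
  shows "A = NNlow S F H K A \<phi> \<inter> H"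
proof -
  interpret group_fusion_system S F
    using assms(1,5) by (simp add: group_fusion_system_def group_fusion_system_axioms_def saturated_def)
  have K: "subgroup K S" using assms(9) unfolding centric_def by blast
  have "A \<subseteq> H" "\<phi> \<in> F A K" using assms(10) unfolding maximal_pair_def pairHK_def by blast+
  then show ?thesis
    using subset_NNlow[OF assms(6)] NNlow_Int_subset[OF assms(2,5,6) K assms(10)] by blast
qed

end
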